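(* Let $F$ be a minimally unsatisfiable clause-set and $C\in F$. Let $C' := \{x\in C : \mathrm{ldeg}_F(x)=1\}$, and for $x\in C'$ let $F_x := \{D\in F : \overline{x}\in D\}$. Assume $|C'|\ge2$ and that for every $x\in C'$ the clause-set $\mathrm{DP}_{\mathrm{var}(x)}(F)$ is saturated minimally unsatisfiable. Then: 1. $|C'|=2$. 2. For all $x\in C'$ and all $D\in F_x$: $C\setminus C'\subseteq D$. 3. For $x,y\in C'$, the clause-sets $\mathrm{DP}_{\mathrm{var}(x)}(F)$ and $\mathrm{DP}_{\mathrm{var}(y)}(F)$ are isomorphic.
   Context: Literals are variables $v$ and complements $\overline{v}$; a clause is a finite set of literals with no complementary pair; a clause-set is a finite set of clauses; $\mathrm{var}(F)$ is the set of variables of $F$, $\mathrm{var}(x)$ the variable of literal $x$; $\mathrm{ldeg}_F(x)$ is the number of clauses of $F$ containing literal $x$. $\mathrm{DP}_v(F) := \{C \in F : v \notin \mathrm{var}(C)\} \cup \{(C \cup D)\setminus\{v,\overline{v}\} : C, D \in F,\ C \cap \overline{D} = \{v\}\}$. A minimally unsatisfiable $F$ is saturated if for every $C \in F$ and every literal $y$ with $\mathrm{var}(y) \in \mathrm{var}(F)\setminus \mathrm{var}(C)$, the clause-set $(F\setminus\{C\})\cup\{C\cup\{y\}\}$ is satisfiable. Clause-sets are isomorphic if a complement-preserving bijection on literals maps the clauses of one exactly onto the clauses of the other. *)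

theory Defs
  imports Main
begin

datatype 'v lit = Pos 'v | Neg 'v

fun comp :: "'v lit \<Rightarrow> 'v lit" where
  "comp (Pos v) = Neg v"
| "comp (Neg v) = Pos v"

fun var :: "'v lit \<Rightarrow> 'v" where
  "var (Pos v) = v"
| "var (Neg v) = v"

type_synonym 'v clause = "'v lit set"
type_synonym 'v cls = "'v lit set set"

definition is_clause :: "'v clause \<Rightarrow> bool" where
  "is_clause C \<longleftrightarrow> finite C \<and> (\<forall>x\<in>C. comp x \<notin> C)"

definition is_clause_set :: "'v cls \<Rightarrow> bool" where
  "is_clause_set F \<longleftrightarrow> finite F \<and> (\<forall>C\<in>F. is_clause C)"

definition vars_cl :: "'v clause \<Rightarrow> 'v set" where
  "vars_cl C = var ` C"

definition vars :: "'v cls \<Rightarrow> 'v set" where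
  "vars F = (\<Union>C\<in>F. vars_cl C)"

fun lit_val :: "('v \<Rightarrow> bool) \<Rightarrow> 'v lit \<Rightarrow> bool" where
  "lit_val \<phi> (Pos v) = \<phi> v"
| "lit_val \<phi> (Neg v) = (\<not> \<phi> v)"

definition satisfiable :: "'v cls \<Rightarrow> bool" where
  "satisfiable F \<longleftrightarrow> (\<exists>\<phi>. \<forall>C\<in>F. \<exists>x\<in>C. lit_val \<phi> x)"

definition min_unsat :: "'v cls \<Rightarrow> bool" where
  "min_unsat F \<longleftrightarrow> is_clause_set F \<and> \<not> satisfiable F \<and> (\<forall>C\<in>F. satisfiable (F - {C}))"

definition saturated_min_unsat :: "'v cls \<Rightarrow> bool" where
  "saturated_min_unsat F \<longleftrightarrow> min_unsat F \<and>
     (\<forall>C\<in>F. \<forall>y. var y \<in> vars F - vars_cl C \<longrightarrow> satisfiable ((F - {C}) \<union> {C \<union> {y}}))"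

definition ldeg :: "'v cls \<Rightarrow> 'v lit \<Rightarrow> nat" where
  "ldeg F x = card {C\<in>F. x \<in> C}"

definition DP :: "'v \<Rightarrow> 'v cls \<Rightarrow> 'v cls" where
  "DP v F = {C\<in>F. v \<notin> vars_cl C} \<union>
     {(C \<union> D) - {Pos v, Neg v} | C D. C \<in> F \<and> D \<in> F \<and> C \<inter> comp ` D = {Pos v}}"

definition isomorphic :: "'v cls \<Rightarrow> 'v cls \<Rightarrow> bool" where
  "isomorphic F G \<longleftrightarrow> (\<exists>f :: 'v lit \<Rightarrow> 'v lit. bij f \<and> (\<forall>x. f (comp x) = comp (f x))
      \<and> (\<lambda>C. f ` C) ` F = G)"

end

theory Submission
  imports Defs
begin

text \<open>
  Let \<open>x\<close> be a literal of \<open>C\<close> that occurs in no other clause. Then \<open>DP (var x) F\<close> consists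
  of the clauses of \<open>F\<close> without \<open>var x\<close> together with the resolvents \<open>(C \<union> D) - {x, comp x}\<close>, so
  in \<open>DP (var x) F\<close> every clause containing another uniquely occurring literal \<open>y\<close> of \<open>C\<close>
  contains all of \<open>C - {x}\<close>.

  The key fact about a saturated minimally unsatisfiable \<open>G\<close>: if every clause containing \<open>w\<close>
  contains \<open>z\<close>, then so does every clause \<open>Q\<close> containing \<open>comp w\<close>. Otherwise saturation gives
  an assignment satisfying \<open>G - {Q}\<close>, falsifying \<open>Q\<close> and making \<open>z\<close> true, and setting \<open>comp w\<close>
  true in it satisfies all of \<open>G\<close>.

  In \<open>DP (var x) F\<close> this turns three uniquely occurring literals \<open>x, y, w\<close> of \<open>C\<close> into a
  clause containing both \<open>y\<close> and \<open>comp y\<close>; in \<open>DP (var y) F\<close> it shows that every clause of \<open>F\<close>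
  containing \<open>comp x\<close> contains \<open>C - {x, y}\<close>. With this, the renaming
  \<open>x \<mapsto> comp y\<close>, \<open>y \<mapsto> comp x\<close> maps \<open>DP (var x) F\<close> onto \<open>DP (var y) F\<close>.
\<close>

lemma comp_comp [simp]: "comp (comp x) = x"
  by (cases x) auto

lemma var_comp [simp]: "var (comp x) = var x"
  by (cases x) auto

lemma comp_neq_self [simp]: "comp x \<noteq> x" "x \<noteq> comp x"
  by (cases x; simp)+

lemma comp_eq_iff: "comp u = v \<longleftrightarrow> u = comp v"
  by auto

lemma lit_val_comp [simp]: "lit_val \<phi> (comp x) \<longleftrightarrow> \<not> lit_val \<phi> x"
  by (cases x) auto

lemma var_eq_iff: "var u = var x \<longleftrightarrow> u = x \<or> u = comp x"
  by (cases u; cases x) auto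

lemma var_in_vars_cl_iff: "var x \<in> vars_cl P \<longleftrightarrow> x \<in> P \<or> comp x \<in> P"
  unfolding vars_cl_def by (metis image_iff var_comp var_eq_iff)

lemma inj_comp: "inj comp"
  by (rule injI) (metis comp_comp)

lemma comp_image_comp_image [simp]: "comp ` comp ` S = S"
  by (simp add: image_image)

lemma clash_sym: "D \<inter> comp ` C = {comp x} \<longleftrightarrow> C \<inter> comp ` D = {x}"
proof -
  have "D \<inter> comp ` C = comp ` (C \<inter> comp ` D)"
    by (simp add: image_Int[OF inj_comp] Int_commute)
  then show ?thesis
    using inj_image_eq_iff[OF inj_comp, of "C \<inter> comp ` D" "{x}"] by simp
qed

definition assign_lit :: "('v \<Rightarrow> bool) \<Rightarrow> 'v lit \<Rightarrow> 'v \<Rightarrow> bool" where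
  "assign_lit \<psi> w = \<psi>(var w := (w = Pos (var w)))"

lemma lit_val_assign_lit:
  "lit_val (assign_lit \<psi> w) u \<longleftrightarrow> (if var u = var w then u = w else lit_val \<psi> u)"
  unfolding assign_lit_def by (cases u; cases w) auto

lemma satisfiable_by_flip:
  assumes sat: "\<forall>P\<in>G - {Q}. \<exists>u\<in>P. lit_val \<psi> u" and w: "w \<in> Q"
    and compw: "\<forall>P\<in>G - {Q}. comp w \<in> P \<longrightarrow> (\<exists>u\<in>P. var u \<noteq> var w \<and> lit_val \<psi> u)"
  shows "satisfiable G"
  unfolding satisfiable_def
proof (intro exI ballI)
  fix P assume P: "P \<in> G"
  show "\<exists>u\<in>P. lit_val (assign_lit \<psi> w) u"
  proof (cases "P = Q \<or> comp w \<in> P")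
    case True
    then show ?thesis
      using w P compw by (auto simp: lit_val_assign_lit)
  next
    case False
    then obtain u where "u \<in> P" "lit_val \<psi> u" "u \<noteq> comp w"
      using sat P by blast
    then show ?thesis
      by (auto simp: lit_val_assign_lit var_eq_iff)
  qed
qed

lemma min_unsat_clause:
  assumes "min_unsat G" "P \<in> G" "u \<in> P"
  shows "comp u \<notin> P"
  using assms unfolding min_unsat_def is_clause_set_def is_clause_def by blast

lemma min_unsat_clause_var_eq:
  assumes "min_unsat G" "P \<in> G" "a \<in> P" "b \<in> P" "var a = var b"
  shows "a = b"
  using assms min_unsat_clause[OF assms(1,2)] by (auto simp: var_eq_iff)

lemma min_unsat_falsifying_assignment:
  assumes "min_unsat G" "Q \<in> G"
  obtains \<psi> where "\<forall>P\<in>G - {Q}. \<exists>u\<in>P. lit_val \<psi> u" "\<forall>u\<in>Q. \<not> lit_val \<psi> u"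
proof -
  obtain \<psi> where \<psi>: "\<forall>P\<in>G - {Q}. \<exists>u\<in>P. lit_val \<psi> u"
    using assms unfolding min_unsat_def satisfiable_def by blast
  moreover have "\<forall>u\<in>Q. \<not> lit_val \<psi> u"
    using assms \<psi> unfolding min_unsat_def satisfiable_def by (metis Diff_iff singletonD)
  ultimately show thesis by (rule that)
qed

lemma min_unsat_comp_occurs:
  assumes mu: "min_unsat G" and "P \<in> G" "w \<in> P"
  shows "\<exists>Q\<in>G. comp w \<in> Q"
proof (rule ccontr)
  assume no_comp: "\<not> ?thesis"
  obtain \<psi> where \<psi>: "\<forall>Q\<in>G - {P}. \<exists>u\<in>Q. lit_val \<psi> u"
    using min_unsat_falsifying_assignment[OF mu \<open>P \<in> G\<close>] by blast
  have "satisfiable G"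
    by (rule satisfiable_by_flip[OF \<psi> \<open>w \<in> P\<close>]) (use no_comp in blast)
  with mu show False by (simp add: min_unsat_def)
qed

lemma saturated_min_unsat_assignment:
  assumes sat: "saturated_min_unsat G" and Q: "Q \<in> G" "z \<notin> Q" and z: "var z \<in> vars G"
  obtains \<psi> where "\<forall>P\<in>G - {Q}. \<exists>u\<in>P. lit_val \<psi> u" "\<forall>u\<in>Q. \<not> lit_val \<psi> u" "lit_val \<psi> z"
proof -
  have mu: "min_unsat G" using sat by (simp add: saturated_min_unsat_def)
  show thesis
  proof (cases "var z \<in> vars_cl Q")
    case True
    obtain \<psi> where \<psi>: "\<forall>P\<in>G - {Q}. \<exists>u\<in>P. lit_val \<psi> u" "\<forall>u\<in>Q. \<not> lit_val \<psi> u"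
      using min_unsat_falsifying_assignment[OF mu Q(1)] by blast
    have "comp z \<in> Q" using True Q(2) by (simp add: var_in_vars_cl_iff)
    then have "lit_val \<psi> z" using \<psi>(2) by fastforce
    with \<psi> show thesis by (rule that)
  next
    case False
    have "satisfiable ((G - {Q}) \<union> {Q \<union> {z}})"
      using sat Q(1) z False unfolding saturated_min_unsat_def by blast
    then obtain \<psi> where \<psi>: "\<forall>P\<in>(G - {Q}) \<union> {Q \<union> {z}}. \<exists>u\<in>P. lit_val \<psi> u"
      unfolding satisfiable_def by blast
    have "\<forall>u\<in>Q. \<not> lit_val \<psi> u"
    proof (intro ballI notI)
      fix u assume "u \<in> Q" "lit_val \<psi> u"
      with \<psi> have "satisfiable G" unfolding satisfiable_def by (metis Diff_iff UnCI singletonD)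
      with mu show False by (simp add: min_unsat_def)
    qed
    with \<psi> that show thesis by auto
  qed
qed

lemma saturated_min_unsat_implied_literal:
  assumes sat: "saturated_min_unsat G" and "var w \<noteq> var z"
    and implies: "\<forall>P\<in>G. w \<in> P \<longrightarrow> z \<in> P" and occurs: "\<exists>P\<in>G. z \<in> P"
    and Q: "Q \<in> G" "comp w \<in> Q"
  shows "z \<in> Q"
proof (rule ccontr)
  assume "z \<notin> Q"
  have "var z \<in> vars G" using occurs unfolding vars_def vars_cl_def by blast
  then obtain \<psi> where \<psi>: "\<forall>P\<in>G - {Q}. \<exists>u\<in>P. lit_val \<psi> u" "lit_val \<psi> z"
    using saturated_min_unsat_assignment[OF sat Q(1) \<open>z \<notin> Q\<close>] by blast
  \<comment> \<open>making \<open>comp w\<close> true only breaks clauses containing \<open>w\<close>, and these are kept true by \<open>z\<close>\<close>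
  have "\<forall>P\<in>G - {Q}. comp (comp w) \<in> P \<longrightarrow> (\<exists>u\<in>P. var u \<noteq> var (comp w) \<and> lit_val \<psi> u)"
  proof (intro ballI impI)
    fix P assume "P \<in> G - {Q}" "comp (comp w) \<in> P"
    then have "z \<in> P" using implies by simp
    then show "\<exists>u\<in>P. var u \<noteq> var (comp w) \<and> lit_val \<psi> u"
      using \<psi>(2) \<open>var w \<noteq> var z\<close> by (intro bexI[of _ z]) auto
  qed
  then have "satisfiable G"
    by (rule satisfiable_by_flip[OF \<psi>(1) Q(2)])
  then show False using sat by (simp add: saturated_min_unsat_def min_unsat_def)
qed

lemma DP_conv:
  "DP (var x) F = {P\<in>F. var x \<notin> vars_cl P}
     \<union> {(C \<union> D) - {x, comp x} | C D. C \<in> F \<and> D \<in> F \<and> C \<inter> comp ` D = {x}}"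
proof (cases x)
  case (Pos v)
  then show ?thesis by (simp add: DP_def)
next
  case (Neg v)
  have clash: "C \<inter> comp ` D = {Pos v} \<longleftrightarrow> D \<inter> comp ` C = {Neg v}" for C D :: "'a clause"
    using clash_sym[of C D "Neg v"] by simp
  have swap: "(C \<union> D) - {Pos v, Neg v} = (D \<union> C) - {Neg v, comp (Neg v)}" for C D :: "'a clause"
    by auto
  have "{(C \<union> D) - {Pos v, Neg v} | C D. C \<in> F \<and> D \<in> F \<and> C \<inter> comp ` D = {Pos v}}
      = {(C \<union> D) - {Neg v, comp (Neg v)} | C D. C \<in> F \<and> D \<in> F \<and> C \<inter> comp ` D = {Neg v}}"
    unfolding clash swap by blast
  then show ?thesis unfolding DP_def Neg by simp
qed

lemma
  assumes "{E\<in>F. x \<in> E} = {C}"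
  shows unique_occurrence_clause: "C \<in> F" "x \<in> C"
    and unique_occurrence_eq: "E \<in> F \<Longrightarrow> x \<in> E \<Longrightarrow> E = C"
  using assms by (simp_all add: set_eq_iff) blast+

lemma DP_unique_occurrence:
  assumes occ: "{E\<in>F. x \<in> E} = {C}"
  shows "DP (var x) F = {P\<in>F. var x \<notin> vars_cl P}
     \<union> {(C \<union> D) - {x, comp x} | D. D \<in> F \<and> C \<inter> comp ` D = {x}}"
proof -
  have "{(C1 \<union> D) - {x, comp x} | C1 D. C1 \<in> F \<and> D \<in> F \<and> C1 \<inter> comp ` D = {x}}
      = {(C \<union> D) - {x, comp x} | D. D \<in> F \<and> C \<inter> comp ` D = {x}}"
  proof (intro set_eqI iffI)
    fix P assume "P \<in> {(C1 \<union> D) - {x, comp x} | C1 D. C1 \<in> F \<and> D \<in> F \<and> C1 \<inter> comp ` D = {x}}"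
    then obtain C1 D where P: "P = (C1 \<union> D) - {x, comp x}" "C1 \<in> F" "D \<in> F" "C1 \<inter> comp ` D = {x}"
      by blast
    then have "C1 = C" using unique_occurrence_eq[OF occ] by blast
    with P show "P \<in> {(C \<union> D) - {x, comp x} | D. D \<in> F \<and> C \<inter> comp ` D = {x}}"
      by blast
  next
    fix P assume "P \<in> {(C \<union> D) - {x, comp x} | D. D \<in> F \<and> C \<inter> comp ` D = {x}}"
    with unique_occurrence_clause(1)[OF occ]
    show "P \<in> {(C1 \<union> D) - {x, comp x} | C1 D. C1 \<in> F \<and> D \<in> F \<and> C1 \<inter> comp ` D = {x}}"
      by blast
  qed
  then show ?thesis unfolding DP_conv by simp
qed

lemma DP_unique_occurrence_resolvent_exists:
  assumes mu: "min_unsat F" and occ: "{E\<in>F. x \<in> E} = {C}"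
    and mu_DP: "min_unsat (DP (var x) F)"
  obtains D where "D \<in> F" "C \<inter> comp ` D = {x}"
proof (rule ccontr)
  assume "\<not> thesis"
  with that have "DP (var x) F = {P\<in>F. var x \<notin> vars_cl P}"
    unfolding DP_unique_occurrence[OF occ] by blast
  moreover have "var x \<in> vars_cl C"
    using unique_occurrence_clause(2)[OF occ] by (simp add: var_in_vars_cl_iff)
  ultimately have "DP (var x) F \<subseteq> F - {C}" by blast
  moreover obtain \<psi> where "\<forall>P\<in>F - {C}. \<exists>u\<in>P. lit_val \<psi> u"
    using min_unsat_falsifying_assignment[OF mu unique_occurrence_clause(1)[OF occ]] by blast
  ultimately have "satisfiable (DP (var x) F)" unfolding satisfiable_def by blast
  with mu_DP show False by (simp add: min_unsat_def)
qed

lemma DP_unique_occurrence_implied: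
  assumes mu: "min_unsat F" and occ_x: "{E\<in>F. x \<in> E} = {C}" and occ_u: "{E\<in>F. u \<in> E} = {C}"
    and z: "z \<in> C" "z \<noteq> x" and P: "P \<in> DP (var x) F" "u \<in> P"
  shows "z \<in> P"
proof -
  note C = unique_occurrence_clause[OF occ_x]
  from P(1) consider "P \<in> F" "var x \<notin> vars_cl P" | D where "P = (C \<union> D) - {x, comp x}"
    unfolding DP_unique_occurrence[OF occ_x] by blast
  then show ?thesis
  proof cases
    case 1
    then have "P = C" using unique_occurrence_eq[OF occ_u] P(2) by blast
    with 1(2) C(2) show ?thesis by (simp add: var_in_vars_cl_iff)
  next
    case 2
    have "z \<noteq> comp x" using min_unsat_clause[OF mu C] z(1) by blast
    with 2 z show ?thesis by simp
  qed
qed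

lemma DP_unique_occurrence_occurs:
  assumes mu: "min_unsat F" and occ: "{E\<in>F. x \<in> E} = {C}"
    and mu_DP: "min_unsat (DP (var x) F)" and z: "z \<in> C" "z \<noteq> x"
  shows "\<exists>P\<in>DP (var x) F. z \<in> P"
proof -
  obtain D where "D \<in> F" "C \<inter> comp ` D = {x}"
    using DP_unique_occurrence_resolvent_exists[OF mu occ mu_DP] by blast
  then have "(C \<union> D) - {x, comp x} \<in> DP (var x) F"
    unfolding DP_unique_occurrence[OF occ] by blast
  moreover have "z \<noteq> comp x"
    using min_unsat_clause[OF mu unique_occurrence_clause[OF occ]] z(1) by blast
  ultimately show ?thesis using z by (intro bexI) auto
qed

lemma unique_occurrence_no_second_clash:
  assumes mu: "min_unsat F" and occ: "{E\<in>F. x \<in> E} = {C}" and y: "y \<in> C" "y \<noteq> x"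
    and D: "D \<in> F" "comp x \<in> D"
  shows "comp y \<notin> D"
proof
  assume "comp y \<in> D"
  note C = unique_occurrence_clause[OF occ]
  obtain \<psi> where \<psi>: "\<forall>P\<in>F - {D}. \<exists>u\<in>P. lit_val \<psi> u" "\<forall>u\<in>D. \<not> lit_val \<psi> u"
    using min_unsat_falsifying_assignment[OF mu D(1)] by blast
  have y_true: "lit_val \<psi> y" using \<psi>(2) \<open>comp y \<in> D\<close> by fastforce
  have "var y \<noteq> var x" using min_unsat_clause_var_eq[OF mu C(1) y(1) C(2)] y(2) by blast
  \<comment> \<open>making \<open>comp x\<close> true only breaks \<open>C\<close>, the unique clause containing \<open>x\<close>, which \<open>y\<close> satisfies\<close>
  have "\<forall>P\<in>F - {D}. comp (comp x) \<in> P \<longrightarrow> (\<exists>u\<in>P. var u \<noteq> var (comp x) \<and> lit_val \<psi> u)"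
  proof (intro ballI impI)
    fix P assume "P \<in> F - {D}" "comp (comp x) \<in> P"
    then have "P = C" using unique_occurrence_eq[OF occ] by simp
    then show "\<exists>u\<in>P. var u \<noteq> var (comp x) \<and> lit_val \<psi> u"
      using y(1) y_true \<open>var y \<noteq> var x\<close> by (intro bexI[of _ y]) auto
  qed
  then have "satisfiable F" by (rule satisfiable_by_flip[OF \<psi>(1) D(2)])
  with mu show False by (simp add: min_unsat_def)
qed

lemma saturated_DP_no_three_unique_occurrences:
  assumes mu: "min_unsat F"
    and occ_x: "{E\<in>F. x \<in> E} = {C}" and occ_y: "{E\<in>F. y \<in> E} = {C}"
    and occ_w: "{E\<in>F. w \<in> E} = {C}"
    and distinct: "x \<noteq> y" "x \<noteq> w" "y \<noteq> w"
    and sat: "saturated_min_unsat (DP (var x) F)"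
  shows False
proof -
  let ?G = "DP (var x) F"
  have mu_G: "min_unsat ?G" using sat by (simp add: saturated_min_unsat_def)
  have C: "C \<in> F" "y \<in> C" "w \<in> C"
    using unique_occurrence_clause[OF occ_y] unique_occurrence_clause[OF occ_w] by simp_all
  obtain P where "P \<in> ?G" "y \<in> P"
    using DP_unique_occurrence_occurs[OF mu occ_x mu_G C(2)] distinct by blast
  then obtain Q where Q: "Q \<in> ?G" "comp y \<in> Q"
    using min_unsat_comp_occurs[OF mu_G] by blast
  have "w \<in> Q"
  proof (rule saturated_min_unsat_implied_literal[OF sat _ _ _ Q])
    show "var y \<noteq> var w" using min_unsat_clause_var_eq[OF mu C] distinct(3) by blast
    show "\<forall>P\<in>?G. y \<in> P \<longrightarrow> w \<in> P"
      using DP_unique_occurrence_implied[OF mu occ_x occ_y C(3)] distinct(2) by blast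
    show "\<exists>P\<in>?G. w \<in> P"
      using DP_unique_occurrence_occurs[OF mu occ_x mu_G C(3)] distinct(2) by blast
  qed
  then have "y \<in> Q"
    using DP_unique_occurrence_implied[OF mu occ_x occ_w C(2) _ Q(1)] distinct(1) by blast
  with Q show False using min_unsat_clause[OF mu_G Q(1)] by blast
qed

lemma saturated_DP_comp_clause_superset:
  assumes mu: "min_unsat F"
    and occ_x: "{E\<in>F. x \<in> E} = {C}" and occ_y: "{E\<in>F. y \<in> E} = {C}" and "x \<noteq> y"
    and sat: "saturated_min_unsat (DP (var y) F)"
    and D: "D \<in> F" "comp x \<in> D"
  shows "C - {x, y} \<subseteq> D"
proof
  fix z assume z: "z \<in> C - {x, y}"
  let ?G = "DP (var y) F"
  have mu_G: "min_unsat ?G" using sat by (simp add: saturated_min_unsat_def)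
  note C = unique_occurrence_clause[OF occ_x]
  have "y \<in> C" using unique_occurrence_clause(2)[OF occ_y] .
  have "y \<notin> D"
  proof
    assume "y \<in> D"
    then have "D = C" using unique_occurrence_eq[OF occ_y D(1)] by simp
    with D(2) show False using min_unsat_clause[OF mu C] by blast
  qed
  moreover have "comp y \<notin> D"
    using unique_occurrence_no_second_clash[OF mu occ_x \<open>y \<in> C\<close> _ D] \<open>x \<noteq> y\<close> by blast
  ultimately have D_G: "D \<in> ?G"
    unfolding DP_unique_occurrence[OF occ_y] using D(1) by (simp add: var_in_vars_cl_iff)
  show "z \<in> D"
  proof (rule saturated_min_unsat_implied_literal[OF sat _ _ _ D_G D(2)])
    show "var x \<noteq> var z" using min_unsat_clause_var_eq[OF mu C(1) _ C(2), of z] z by force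
    show "\<forall>P\<in>?G. x \<in> P \<longrightarrow> z \<in> P"
      using DP_unique_occurrence_implied[OF mu occ_y occ_x] z by blast
    show "\<exists>P\<in>?G. z \<in> P"
      using DP_unique_occurrence_occurs[OF mu occ_y mu_G] z by blast
  qed
qed

definition lit_swap :: "'v lit \<Rightarrow> 'v lit \<Rightarrow> 'v lit \<Rightarrow> 'v lit" where
  "lit_swap x y u = (if u = x then comp y else if u = comp y then x
     else if u = comp x then y else if u = y then comp x else u)"

lemma
  assumes "var x \<noteq> var y"
  shows lit_swap_lit_swap: "lit_swap x y (lit_swap x y u) = u"
    and lit_swap_comp: "lit_swap x y (comp u) = comp (lit_swap x y u)"
    and lit_swap_commute: "lit_swap y x = lit_swap x y"
    and lit_swap_comp_right: "lit_swap x y (comp y) = x"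
    and lit_swap_left: "lit_swap x y y = comp x"
  using assms by (auto simp: lit_swap_def comp_eq_iff var_eq_iff)

lemma lit_swap_image_fixed:
  assumes "var x \<notin> vars_cl S" "var y \<notin> vars_cl S"
  shows "lit_swap x y ` S = S"
proof -
  have "lit_swap x y u = u" if "u \<in> S" for u
    using assms that by (auto simp: lit_swap_def var_in_vars_cl_iff)
  then show ?thesis by force
qed

lemma isomorphic_by_involution:
  assumes inv: "\<And>u. f (f u) = u" and f_comp: "\<And>u. f (comp u) = comp (f u)"
    and GH: "\<And>P. P \<in> G \<Longrightarrow> f ` P \<in> H" and HG: "\<And>P. P \<in> H \<Longrightarrow> f ` P \<in> G"
  shows "isomorphic G H"
proof -
  have "f ` f ` P = P" for P using inv by (simp add: image_image)
  then have "(\<lambda>P. f ` P) ` G = H" using GH HG by (metis image_eqI subsetI subset_antisym image_subsetI)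
  moreover have "bij f" using inv by (rule involuntory_imp_bij)
  ultimately show ?thesis unfolding isomorphic_def using f_comp by blast
qed

lemma DP_lit_swap_mem_of_clause:
  assumes mu: "min_unsat F"
    and occ_x: "{E\<in>F. x \<in> E} = {C}" and occ_y: "{E\<in>F. y \<in> E} = {C}" and "x \<noteq> y"
    and sub_y: "\<And>D. D \<in> F \<Longrightarrow> comp y \<in> D \<Longrightarrow> C - {y, x} \<subseteq> D"
    and P: "P \<in> F" "var x \<notin> vars_cl P"
  shows "lit_swap x y ` P \<in> DP (var y) F"
proof -
  note C = unique_occurrence_clause[OF occ_x]
  have "y \<in> C" using unique_occurrence_clause(2)[OF occ_y] .
  have "var x \<noteq> var y" using min_unsat_clause_var_eq[OF mu C \<open>y \<in> C\<close>] \<open>x \<noteq> y\<close> by blast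
  have "y \<notin> P"
  proof
    assume "y \<in> P"
    then have "P = C" using unique_occurrence_eq[OF occ_y P(1)] by simp
    with P(2) C(2) show False by (simp add: var_in_vars_cl_iff)
  qed
  show ?thesis
  proof (cases "comp y \<in> P")
    case False
    with \<open>y \<notin> P\<close> have "var y \<notin> vars_cl P" by (simp add: var_in_vars_cl_iff)
    with P show ?thesis
      unfolding DP_unique_occurrence[OF occ_y] by (simp add: lit_swap_image_fixed)
  next
    case True
    let ?S = "P - {comp y}"
    have S: "var x \<notin> vars_cl ?S" "var y \<notin> vars_cl ?S"
      using P(2) \<open>y \<notin> P\<close> by (auto simp: var_in_vars_cl_iff)
    have "lit_swap x y ` P = lit_swap x y ` insert (comp y) ?S"
      using True by (simp add: insert_absorb)
    also have "\<dots> = insert x ?S"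
      unfolding image_insert lit_swap_image_fixed[OF S] lit_swap_comp_right[OF \<open>var x \<noteq> var y\<close>] ..
    also have "\<dots> = (C \<union> P) - {y, comp y}"
      using sub_y[OF P(1) True] C(2) P(2) \<open>y \<notin> P\<close> min_unsat_clause[OF mu C(1) \<open>y \<in> C\<close>] \<open>x \<noteq> y\<close>
      by (auto simp: var_in_vars_cl_iff)
    finally have swap_P: "lit_swap x y ` P = (C \<union> P) - {y, comp y}" .
    have "C \<inter> comp ` P = {y}"
    proof (intro equalityI subsetI)
      fix u assume u: "u \<in> C \<inter> comp ` P"
      then have "comp u \<in> P" by force
      then have "u \<notin> P" using min_unsat_clause[OF mu P(1)] by force
      with u sub_y[OF P(1) True] P(2) show "u \<in> {y}" by (auto simp: var_in_vars_cl_iff)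
    next
      fix u assume "u \<in> {y}"
      with \<open>y \<in> C\<close> True show "u \<in> C \<inter> comp ` P" by (auto intro: rev_image_eqI)
    qed
    with P(1) have "(C \<union> P) - {y, comp y} \<in> DP (var y) F"
      unfolding DP_unique_occurrence[OF occ_y] by blast
    with swap_P show ?thesis by simp
  qed
qed

lemma DP_lit_swap_mem_of_resolvent:
  assumes mu: "min_unsat F"
    and occ_x: "{E\<in>F. x \<in> E} = {C}" and occ_y: "{E\<in>F. y \<in> E} = {C}" and "x \<noteq> y"
    and sub_x: "\<And>D. D \<in> F \<Longrightarrow> comp x \<in> D \<Longrightarrow> C - {x, y} \<subseteq> D"
    and D: "D \<in> F" "C \<inter> comp ` D = {x}"
  shows "lit_swap x y ` ((C \<union> D) - {x, comp x}) \<in> DP (var y) F"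
proof -
  note C = unique_occurrence_clause[OF occ_x]
  have "y \<in> C" using unique_occurrence_clause(2)[OF occ_y] .
  have "var x \<noteq> var y" using min_unsat_clause_var_eq[OF mu C \<open>y \<in> C\<close>] \<open>x \<noteq> y\<close> by blast
  have "comp x \<in> D" using D(2) by force
  have "x \<notin> D" using min_unsat_clause[OF mu D(1) \<open>comp x \<in> D\<close>] by simp
  have "y \<notin> D"
  proof
    assume "y \<in> D"
    then have "D = C" using unique_occurrence_eq[OF occ_y D(1)] by simp
    with \<open>comp x \<in> D\<close> show False using min_unsat_clause[OF mu C] by blast
  qed
  have "comp y \<notin> D"
    using unique_occurrence_no_second_clash[OF mu occ_x \<open>y \<in> C\<close> _ D(1) \<open>comp x \<in> D\<close>] \<open>x \<noteq> y\<close>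
    by blast
  let ?S = "D - {comp x}"
  have S: "var x \<notin> vars_cl ?S" "var y \<notin> vars_cl ?S"
    using \<open>x \<notin> D\<close> \<open>y \<notin> D\<close> \<open>comp y \<notin> D\<close> by (auto simp: var_in_vars_cl_iff)
  have "(C \<union> D) - {x, comp x} = insert y ?S"
    using sub_x[OF D(1) \<open>comp x \<in> D\<close>] \<open>y \<in> C\<close> \<open>x \<noteq> y\<close> \<open>var x \<noteq> var y\<close> \<open>x \<notin> D\<close>
    by (auto simp: var_eq_iff[symmetric])
  then have "lit_swap x y ` ((C \<union> D) - {x, comp x}) = insert (comp x) ?S"
    using \<open>var x \<noteq> var y\<close> by (simp add: lit_swap_image_fixed[OF S] lit_swap_comp_right lit_swap_left)
  also have "\<dots> = D" using \<open>comp x \<in> D\<close> by blast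
  finally show ?thesis
    using D(1) \<open>y \<notin> D\<close> \<open>comp y \<notin> D\<close>
    unfolding DP_unique_occurrence[OF occ_y] by (simp add: var_in_vars_cl_iff)
qed

lemma DP_lit_swap_mem:
  assumes mu: "min_unsat F"
    and occ_x: "{E\<in>F. x \<in> E} = {C}" and occ_y: "{E\<in>F. y \<in> E} = {C}" and "x \<noteq> y"
    and sub_x: "\<And>D. D \<in> F \<Longrightarrow> comp x \<in> D \<Longrightarrow> C - {x, y} \<subseteq> D"
    and sub_y: "\<And>D. D \<in> F \<Longrightarrow> comp y \<in> D \<Longrightarrow> C - {y, x} \<subseteq> D"
    and P: "P \<in> DP (var x) F"
  shows "lit_swap x y ` P \<in> DP (var y) F"
proof -
  from P consider "P \<in> F" "var x \<notin> vars_cl P"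
    | D where "D \<in> F" "C \<inter> comp ` D = {x}" "P = (C \<union> D) - {x, comp x}"
    unfolding DP_unique_occurrence[OF occ_x] by blast
  then show ?thesis
  proof cases
    case 1
    then show ?thesis using DP_lit_swap_mem_of_clause[OF mu occ_x occ_y \<open>x \<noteq> y\<close> sub_y] by blast
  next
    case 2
    then show ?thesis
      using DP_lit_swap_mem_of_resolvent[OF mu occ_x occ_y \<open>x \<noteq> y\<close> sub_x] by simp
  qed
qed

lemma DP_isomorphic_of_unique_occurrences:
  assumes mu: "min_unsat F"
    and occ_x: "{E\<in>F. x \<in> E} = {C}" and occ_y: "{E\<in>F. y \<in> E} = {C}" and "x \<noteq> y"
    and sub_x: "\<And>D. D \<in> F \<Longrightarrow> comp x \<in> D \<Longrightarrow> C - {x, y} \<subseteq> D"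
    and sub_y: "\<And>D. D \<in> F \<Longrightarrow> comp y \<in> D \<Longrightarrow> C - {y, x} \<subseteq> D"
  shows "isomorphic (DP (var x) F) (DP (var y) F)"
proof (rule isomorphic_by_involution)
  note C = unique_occurrence_clause[OF occ_x]
  have "var x \<noteq> var y"
    using min_unsat_clause_var_eq[OF mu C unique_occurrence_clause(2)[OF occ_y]] \<open>x \<noteq> y\<close> by blast
  then show "lit_swap x y (lit_swap x y u) = u" "lit_swap x y (comp u) = comp (lit_swap x y u)" for u
    by (simp_all add: lit_swap_lit_swap lit_swap_comp)
  show "lit_swap x y ` P \<in> DP (var y) F" if "P \<in> DP (var x) F" for P
    using DP_lit_swap_mem[OF mu occ_x occ_y \<open>x \<noteq> y\<close> sub_x sub_y that] .
  have "lit_swap y x ` P \<in> DP (var x) F" if "P \<in> DP (var y) F" for P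
    using DP_lit_swap_mem[OF mu occ_y occ_x \<open>x \<noteq> y\<close>[symmetric] sub_y sub_x that] .
  then show "lit_swap x y ` P \<in> DP (var x) F" if "P \<in> DP (var y) F" for P
    using that lit_swap_commute[OF \<open>var x \<noteq> var y\<close>] by simp
qed

lemma isomorphic_refl: "isomorphic G G"
  unfolding isomorphic_def by (intro exI[of _ id]) auto

lemma ldeg_eq_1_unique_occurrence:
  assumes "ldeg F x = 1" "C \<in> F" "x \<in> C"
  shows "{E\<in>F. x \<in> E} = {C}"
proof -
  obtain E where E: "{E\<in>F. x \<in> E} = {E}"
    using assms(1) unfolding ldeg_def by (rule card_1_singletonE)
  with assms(2,3) have "E = C" by blast
  with E show ?thesis by simp
qed

lemma card_eq_2_if_no_three:
  assumes "card A \<ge> 2"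
    and no_three: "\<And>x y w. \<lbrakk>x \<in> A; y \<in> A; w \<in> A; x \<noteq> y; x \<noteq> w; y \<noteq> w\<rbrakk> \<Longrightarrow> False"
  shows "card A = 2"
proof -
  have "finite A" using assms(1) by (simp add: card_ge_0_finite)
  then obtain x y where xy: "x \<in> A" "y \<in> A" "x \<noteq> y"
    using assms(1) card_le_Suc0_iff_eq[of A] by auto
  then have "A = {x, y}" using no_three by blast
  with xy(3) show ?thesis by simp
qed

theorem lemma68:
  fixes F :: "'v cls" and C :: "'v clause"
  assumes "min_unsat F"
    and "C \<in> F"
    and "C' = {x\<in>C. ldeg F x = 1}"
    and "card C' \<ge> 2"
    and "\<forall>x\<in>C'. saturated_min_unsat (DP (var x) F)"
  shows "card C' = 2
    \<and> (\<forall>x\<in>C'. \<forall>D\<in>{D\<in>F. comp x \<in> D}. C - C' \<subseteq> D)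
    \<and> (\<forall>x\<in>C'. \<forall>y\<in>C'. isomorphic (DP (var x) F) (DP (var y) F))"
proof -
  note mu = assms(1)
  have occ: "{E\<in>F. x \<in> E} = {C}" if "x \<in> C'" for x
    using ldeg_eq_1_unique_occurrence assms(2,3) that by blast
  have sat: "saturated_min_unsat (DP (var x) F)" if "x \<in> C'" for x
    using assms(5) that by blast
  have superset: "C - {x, y} \<subseteq> D"
    if "x \<in> C'" "y \<in> C'" "x \<noteq> y" "D \<in> F" "comp x \<in> D" for x y D
    using saturated_DP_comp_clause_superset[OF mu occ[OF that(1)] occ[OF that(2)] that(3)
        sat[OF that(2)] that(4,5)] .
  have card: "card C' = 2"
  proof (rule card_eq_2_if_no_three[OF assms(4)])
    fix x y w assume "x \<in> C'" "y \<in> C'" "w \<in> C'" "x \<noteq> y" "x \<noteq> w" "y \<noteq> w"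
    show False
      by (rule saturated_DP_no_three_unique_occurrences[OF mu occ[OF \<open>x \<in> C'\<close>]
          occ[OF \<open>y \<in> C'\<close>] occ[OF \<open>w \<in> C'\<close>] \<open>x \<noteq> y\<close> \<open>x \<noteq> w\<close> \<open>y \<noteq> w\<close>
          sat[OF \<open>x \<in> C'\<close>]])
  qed
  have "C - C' \<subseteq> D" if "u \<in> C'" "D \<in> F" "comp u \<in> D" for u D
  proof -
    obtain v where "v \<in> C'" "u \<noteq> v" using card that(1) unfolding card_2_iff' by metis
    then have "C - C' \<subseteq> C - {u, v}" using that(1) by blast
    also have "\<dots> \<subseteq> D" by (rule superset[OF that(1) \<open>v \<in> C'\<close> \<open>u \<noteq> v\<close> that(2,3)])
    finally show ?thesis .
  qed
  moreover have "isomorphic (DP (var u) F) (DP (var v) F)" if "u \<in> C'" "v \<in> C'" for u v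
  proof (cases "u = v")
    case True
    then show ?thesis by (simp add: isomorphic_refl)
  next
    case False
    from superset[OF that False] superset[OF that(2,1) False[symmetric]] show ?thesis
      by (rule DP_isomorphic_of_unique_occurrences[OF mu occ[OF that(1)] occ[OF that(2)] False])
  qed
  ultimately show ?thesis using card by blast
qed

end
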